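(* Let $G$ be a non-complete double-critical $k$-chromatic graph and let $xy\in E(G)$. If $A(xy)$ is non-empty, then the induced subgraph $G[A(xy)]$ has no isolated vertices, i.e. $\delta(G[A(xy)])\ge 1$. Similarly, if $C(xy)$ is non-empty, then $\delta(G[C(xy)])\ge 1$.
   Context: All graphs are finite and simple. A graph $G$ is (vertex-)critical if $\chi(G-v)<\chi(G)$ for every vertex $v\in V(G)$. A critical graph $G$ is double-critical if $\chi(G-x-y)\le\chi(G)-2$ for every edge $xy\in E(G)$. For an edge $xy$, $A(xy):=N(x)\setminus N[y]$ and $C(xy):=N(y)\setminus N[x]$, where $N(v)$ is the open and $N[v]=N(v)\cup\{v\}$ the closed neighbourhood. *)

theory Defs
  imports Main
begin

definition graph :: "'a set \<Rightarrow> 'a set set \<Rightarrow> bool" where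
  "graph V E \<longleftrightarrow> finite V \<and> (\<forall>e\<in>E. e \<subseteq> V \<and> card e = 2)"

definition adj :: "'a set set \<Rightarrow> 'a \<Rightarrow> 'a \<Rightarrow> bool" where
  "adj E u v \<longleftrightarrow> {u, v} \<in> E"

definition nbhd :: "'a set \<Rightarrow> 'a set set \<Rightarrow> 'a \<Rightarrow> 'a set" where
  "nbhd V E v = {u \<in> V. adj E v u}"

definition cnbhd :: "'a set \<Rightarrow> 'a set set \<Rightarrow> 'a \<Rightarrow> 'a set" where
  "cnbhd V E v = insert v (nbhd V E v)"

definition induced_edges :: "'a set set \<Rightarrow> 'a set \<Rightarrow> 'a set set" where
  "induced_edges E S = {e \<in> E. e \<subseteq> S}"

definition proper_colouring :: "'a set \<Rightarrow> 'a set set \<Rightarrow> ('a \<Rightarrow> nat) \<Rightarrow> nat \<Rightarrow> bool" where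
  "proper_colouring V E c k \<longleftrightarrow> (\<forall>v\<in>V. c v < k) \<and> (\<forall>u\<in>V. \<forall>v\<in>V. adj E u v \<longrightarrow> c u \<noteq> c v)"

definition chromatic_number :: "'a set \<Rightarrow> 'a set set \<Rightarrow> nat" where
  "chromatic_number V E = (LEAST k. \<exists>c. proper_colouring V E c k)"

definition vertex_critical :: "'a set \<Rightarrow> 'a set set \<Rightarrow> bool" where
  "vertex_critical V E \<longleftrightarrow>
     (\<forall>v\<in>V. chromatic_number (V - {v}) (induced_edges E (V - {v})) < chromatic_number V E)"

definition double_critical :: "'a set \<Rightarrow> 'a set set \<Rightarrow> bool" where
  "double_critical V E \<longleftrightarrow> vertex_critical V E \<and>
     (\<forall>x y. {x, y} \<in> E \<longrightarrow>
        chromatic_number (V - {x, y}) (induced_edges E (V - {x, y})) + 2 \<le> chromatic_number V E)"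

definition complete_graph :: "'a set \<Rightarrow> 'a set set \<Rightarrow> bool" where
  "complete_graph V E \<longleftrightarrow> (\<forall>u\<in>V. \<forall>v\<in>V. u \<noteq> v \<longrightarrow> adj E u v)"

definition A_set :: "'a set \<Rightarrow> 'a set set \<Rightarrow> 'a \<Rightarrow> 'a \<Rightarrow> 'a set" where
  "A_set V E x y = nbhd V E x - cnbhd V E y"

definition C_set :: "'a set \<Rightarrow> 'a set set \<Rightarrow> 'a \<Rightarrow> 'a \<Rightarrow> 'a set" where
  "C_set V E x y = nbhd V E y - cnbhd V E x"

definition no_isolated_in_induced :: "'a set set \<Rightarrow> 'a set \<Rightarrow> bool" where
  "no_isolated_in_induced E S \<longleftrightarrow> (\<forall>v\<in>S. \<exists>u\<in>S. adj (induced_edges E S) v u)"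

end

theory Submission
  imports Defs
begin

text \<open>Suppose a vertex \<open>a \<in> A(xy)\<close> had no neighbour in \<open>A(xy)\<close>. Colour \<open>G - x - a\<close> optimally
  with \<open>m \<le> \<chi>(G) - 2\<close> colours. Give \<open>x\<close> the colour of \<open>y\<close>, and move \<open>a\<close> together with the
  neighbours of \<open>x\<close> that have \<open>y\<close>'s colour into one new colour class. These neighbours are
  not adjacent to \<open>y\<close>, so they lie in \<open>A(xy)\<close> and hence are not adjacent to \<open>a\<close>; so the new
  class is independent and \<open>G\<close> is \<open>(m + 1)\<close>-colourable, a contradiction. Swapping \<open>x\<close> and
  \<open>y\<close> turns \<open>C(xy)\<close> into \<open>A(yx)\<close>.\<close>

lemma adj_commute: "adj E u v \<longleftrightarrow> adj E v u"
  by (simp add: adj_def insert_commute)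

lemma adj_irrefl: "graph V E \<Longrightarrow> \<not> adj E v v"
  unfolding graph_def adj_def by fastforce

lemma adj_in_vertices: "graph V E \<Longrightarrow> adj E u v \<Longrightarrow> u \<in> V \<and> v \<in> V"
  unfolding graph_def adj_def by blast

lemma adj_induced_edges: "adj (induced_edges E S) u v \<longleftrightarrow> adj E u v \<and> u \<in> S \<and> v \<in> S"
  by (auto simp: adj_def induced_edges_def)

lemma graph_induced: "graph V E \<Longrightarrow> graph (V - X) (induced_edges E (V - X))"
  by (auto simp: graph_def induced_edges_def)

lemma C_set_eq_A_set_swap: "C_set V E x y = A_set V E y x"
  by (simp add: A_set_def C_set_def)

lemma proper_colouring_exists:
  assumes "graph V E"
  shows "\<exists>k c. proper_colouring V E c k"
proof -
  obtain f where f: "bij_betw f V {0..<card V}"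
    using assms ex_bij_betw_finite_nat unfolding graph_def by blast
  have "proper_colouring V E f (card V)"
    unfolding proper_colouring_def
    using f adj_irrefl[OF assms] by (auto simp: bij_betw_def inj_on_def)
  then show ?thesis by blast
qed

lemma proper_colouring_chromatic_number:
  "graph V E \<Longrightarrow> \<exists>c. proper_colouring V E c (chromatic_number V E)"
  unfolding chromatic_number_def by (rule LeastI_ex) (rule proper_colouring_exists)

lemma chromatic_number_le: "proper_colouring V E c k \<Longrightarrow> chromatic_number V E \<le> k"
  unfolding chromatic_number_def by (blast intro: Least_le)

lemma proper_colouring_extend_new_colour:
  assumes G: "graph V E" and xy: "adj E x y" and xa: "adj E x a" and ay: "\<not> adj E a y" "a \<noteq> y"
    and c: "proper_colouring (V - {x, a}) (induced_edges E (V - {x, a})) c m"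
    and no_common: "\<And>q. q \<in> V - {x, a} \<Longrightarrow> adj E a q \<Longrightarrow> adj E x q \<Longrightarrow> c q \<noteq> c y"
  shows "\<exists>d. proper_colouring V E d (m + 1)"
proof -
  let ?S = "V - {x, a}"
  define B where "B = {v. v = a \<or> (adj E x v \<and> c v = c y)}"
  define d where "d v = (if v = x then c y else if v \<in> B then m else c v)" for v
  have c_less: "c v < m" if "v \<in> ?S" for v
    using c that unfolding proper_colouring_def by blast
  have c_proper: "c u \<noteq> c v" if "u \<in> ?S" "v \<in> ?S" "adj E u v" for u v
    using c that unfolding proper_colouring_def by (auto simp: adj_induced_edges)
  have y_S: "y \<in> ?S"
    using adj_in_vertices[OF G xy] adj_irrefl[OF G, of x] xy ay by auto
  have x_B: "x \<notin> B"
    using adj_irrefl[OF G] xa adj_irrefl[OF G, of x] by (auto simp: B_def)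
  have d_ne: "d u \<noteq> d v"
    if uv: "adj E u v" "u \<in> V" "v \<in> V" and u: "u = x \<or> u \<in> B" for u v
  proof (cases "u = x")
    case True
    then have "v \<noteq> x" using uv adj_irrefl[OF G] by blast
    then show ?thesis
      using True uv c_less[OF y_S] by (auto simp: d_def B_def)
  next
    case u_x: False
    then have u_B: "u \<in> B" using u by blast
    show ?thesis
    proof (cases "v = x \<or> v \<notin> B")
      case True
      then show ?thesis
        using u_x u_B uv x_B c_less[of v] c_less[OF y_S] by (auto simp: d_def B_def adj_commute)
    next
      case False
      then have "v \<in> B" "v \<noteq> x" by auto
      moreover have "u \<noteq> v" using uv adj_irrefl[OF G] by blast
      ultimately consider "u = a" | "v = a" | "u \<in> ?S" "v \<in> ?S" "c u = c y" "c v = c y"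
        using u_B u_x uv by (auto simp: B_def)
      then show ?thesis
      proof cases
        case 1
        then show ?thesis using no_common[of v] \<open>v \<in> B\<close> \<open>v \<noteq> x\<close> \<open>u \<noteq> v\<close> uv
          by (auto simp: B_def)
      next
        case 2
        then show ?thesis using no_common[of u] u_B u_x \<open>u \<noteq> v\<close> uv
          by (auto simp: B_def adj_commute)
      next
        case 3
        then show ?thesis using c_proper uv by metis
      qed
    qed
  qed
  have "proper_colouring V E d (m + 1)"
    unfolding proper_colouring_def
  proof (intro conjI ballI impI)
    fix v assume "v \<in> V"
    then show "d v < m + 1" using c_less[of v] c_less[OF y_S] by (auto simp: d_def B_def)
  next
    fix u v assume uv: "u \<in> V" "v \<in> V" "adj E u v"
    show "d u \<noteq> d v"
    proof (cases "u = x \<or> u \<in> B")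
      case True
      then show ?thesis using d_ne uv by blast
    next
      case u_outside: False
      show ?thesis
      proof (cases "v = x \<or> v \<in> B")
        case True
        then show ?thesis using d_ne[of v u] uv adj_commute by metis
      next
        case False
        then have "u \<in> ?S" "v \<in> ?S" using u_outside uv by (auto simp: B_def)
        then show ?thesis using c_proper uv u_outside False by (simp add: d_def)
      qed
    qed
  qed
  then show ?thesis by blast
qed

lemma A_set_has_neighbour:
  assumes G: "graph V E" and dc: "double_critical V E" and xy: "{x, y} \<in> E"
    and a: "a \<in> A_set V E x y"
  shows "\<exists>u \<in> A_set V E x y. adj E a u"
proof (rule ccontr)
  assume isolated: "\<not> ?thesis"
  let ?S = "V - {x, a}"
  have xa: "adj E x a" and ay: "\<not> adj E a y" "a \<noteq> y"
    using a by (auto simp: A_set_def nbhd_def cnbhd_def adj_commute)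
  obtain c where c: "proper_colouring ?S (induced_edges E ?S) c (chromatic_number ?S (induced_edges E ?S))"
    using proper_colouring_chromatic_number[OF graph_induced[OF G]] by blast
  have y_S: "y \<in> ?S"
    using adj_in_vertices[OF G, of x y] adj_irrefl[OF G, of x] xy ay by (auto simp: adj_def)
  have c_proper: "c u \<noteq> c v" if "u \<in> ?S" "v \<in> ?S" "adj E u v" for u v
    using c that unfolding proper_colouring_def by (auto simp: adj_induced_edges)
  have "\<not> adj E y q" if "q \<in> ?S" "c q = c y" for q
    using c_proper[OF y_S that(1)] that(2) by auto
  then have "c q \<noteq> c y" if "q \<in> ?S" "adj E a q" "adj E x q" for q
    using that isolated ay by (auto simp: A_set_def nbhd_def cnbhd_def adj_commute)
  then obtain d where "proper_colouring V E d (chromatic_number ?S (induced_edges E ?S) + 1)"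
    using proper_colouring_extend_new_colour[OF G _ xa ay c] xy by (auto simp: adj_def)
  moreover have "chromatic_number ?S (induced_edges E ?S) + 2 \<le> chromatic_number V E"
    using dc xa unfolding double_critical_def adj_def by blast
  ultimately show False using chromatic_number_le by fastforce
qed

lemma no_isolated_in_A_set:
  "graph V E \<Longrightarrow> double_critical V E \<Longrightarrow> {x, y} \<in> E \<Longrightarrow> no_isolated_in_induced E (A_set V E x y)"
  unfolding no_isolated_in_induced_def
  by (auto simp: adj_induced_edges dest: A_set_has_neighbour)

theorem proposition9:
  fixes V :: "'a set" and E :: "'a set set" and k :: nat and x y :: 'a
  assumes "graph V E"
    and "double_critical V E"
    and "chromatic_number V E = k"
    and "\<not> complete_graph V E"
    and "{x, y} \<in> E"
  shows "(A_set V E x y \<noteq> {} \<longrightarrow> no_isolated_in_induced E (A_set V E x y))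
       \<and> (C_set V E x y \<noteq> {} \<longrightarrow> no_isolated_in_induced E (C_set V E x y))"
proof -
  have "{y, x} \<in> E" using assms(5) by (simp add: insert_commute)
  then show ?thesis
    using no_isolated_in_A_set[OF assms(1,2)] assms(5) by (simp add: C_set_eq_A_set_swap)
qed

end
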